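(* In the Simon urn described in the context, with fixed trigger probability $p\in(0,1)$, for every color index $c\ge2$ and every time $n\ge2$, $$\Pr(K_{n,c}=0)=\binom{n-2}{c-2}p^{c-2}(1-p)^{n-c+1}+\sum_{r=1}^{c-2}\binom{n-2}{r-1}p^{r-1}(1-p)^{n-r-1},$$ with the convention that $\binom{m}{k}=0$ when $k>m$ or $k<0$.
   Context: Simon urn. The urn is empty at time $0$. Let $B_0=1$ and let $(B_n)_{n\ge1}$ be i.i.d. Bernoulli random variables with $\Pr(B_n=1)=p\in(0,1)$, independent of everything else. Colors are labelled $1,2,\dots$ in order of first appearance. At each time $n\ge1$: if $B_{n-1}=1$, one ball of a new color (not yet present) is added to the urn and this color is registered; if $B_{n-1}=0$, a ball is drawn uniformly at random from the urn, its color is registered, and one additional ball of that color is added. Thus the urn contains $n$ balls at time $n$. $K_{n,c}$ denotes the number of times color $c$ has been registered up to and including time $n$ (equal to the number of balls of color $c$ in the urn at time $n$), and $K_{n,c}=0$ if color $c$ has not yet appeared. *)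

theory Defs
  imports "HOL-Probability.Probability"
begin

text \<open>Urn state at time n: list ks of ball counts, ks ! (c-1) = number of balls
  of colour c (colours labelled 1,2,... in order of first appearance).\<close>

definition balls :: "nat list \<Rightarrow> nat multiset" where
  "balls ks = (\<Sum>i<length ks. replicate_mset (ks ! i) i)"

definition urn_step :: "bool \<Rightarrow> nat list \<Rightarrow> nat list pmf" where
  "urn_step b ks = (if b then return_pmf (ks @ [1])
     else map_pmf (\<lambda>i. ks[i := ks ! i + 1]) (pmf_of_multiset (balls ks)))"

text \<open>Distribution of the urn at time n. B_0 = 1, B_m ~ Bernoulli(p) i.i.d. for m >= 1,
  each drawn fresh (hence independent of everything else).\<close>

fun simon_urn :: "real \<Rightarrow> nat \<Rightarrow> nat list pmf" where
  "simon_urn p 0 = return_pmf []"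
| "simon_urn p (Suc 0) = urn_step True []"
| "simon_urn p (Suc (Suc m)) =
     bind_pmf (simon_urn p (Suc m)) (\<lambda>ks. bind_pmf (bernoulli_pmf p) (\<lambda>b. urn_step b ks))"

definition Kcol :: "nat list \<Rightarrow> nat \<Rightarrow> nat" where
  "Kcol ks c = (if 1 \<le> c \<and> c \<le> length ks then ks ! (c - 1) else 0)"

end

theory Submission
  imports Defs
begin

text \<open>Every colour present in the urn has at least one ball, so \<open>K\<^sub>n\<^sub>,\<^sub>c = 0\<close> just says
  that fewer than \<open>c\<close> colours have appeared by time \<open>n\<close>. A new colour enters exactly at the
  steps with \<open>B\<^sub>m = 1\<close>, so the number of colours at time \<open>n\<close> is \<open>1 + Bin(n - 1, p)\<close>, and the
  probability in question is \<open>Pr(Bin(n - 1, p) \<le> c - 2)\<close>. Splitting off the last trial, this is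
  \<open>Pr(Bin(n - 2, p) = c - 2) (1 - p) + Pr(Bin(n - 2, p) < c - 2)\<close>, which is the formula.\<close>

lemma map_pmf_length_urn_step:
  "map_pmf length (urn_step b ks) = return_pmf (if b then Suc (length ks) else length ks)"
  by (auto simp: urn_step_def map_pmf_comp)

lemma map_pmf_length_simon_urn:
  assumes "0 \<le> p" "p \<le> 1"
  shows "map_pmf length (simon_urn p (Suc m)) = map_pmf Suc (binomial_pmf m p)"
proof (induction m)
  case 0
  then show ?case using assms by (simp add: urn_step_def binomial_pmf_0)
next
  case (Suc m)
  have "map_pmf length (simon_urn p (Suc (Suc m))) =
      bind_pmf (map_pmf length (simon_urn p (Suc m)))
        (\<lambda>l. bind_pmf (bernoulli_pmf p) (\<lambda>b. return_pmf (if b then Suc l else l)))"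
    by (simp add: map_bind_pmf map_pmf_length_urn_step bind_map_pmf)
  also have "\<dots> = bind_pmf (bernoulli_pmf p) (\<lambda>b. bind_pmf (binomial_pmf m p)
      (\<lambda>k. return_pmf (if b then Suc (Suc k) else Suc k)))"
    by (simp add: Suc bind_map_pmf bind_commute_pmf[of "binomial_pmf m p"])
  also have "\<dots> = map_pmf Suc (binomial_pmf (Suc m) p)"
    using assms by (auto simp: binomial_pmf_Suc map_bind_pmf intro!: bind_pmf_cong)
  finally show ?case .
qed

lemma simon_urn_counts_pos:
  assumes "ks \<in> set_pmf (simon_urn p n)" "k \<in> set ks"
  shows "0 < k"
  using assms
proof (induction p n arbitrary: ks k rule: simon_urn.induct)
  case (1 p)
  then show ?case by simp
next
  case (2 p)
  then show ?case by (simp add: urn_step_def)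
next
  case (3 p m)
  then obtain ks0 b where ks0: "ks0 \<in> set_pmf (simon_urn p (Suc m))"
    and ks: "ks \<in> set_pmf (urn_step b ks0)"
    by auto
  have pos: "\<forall>k\<in>set ks0. 0 < k"
    using "3.IH" ks0 by blast
  show ?case
  proof (cases b)
    case True
    then show ?thesis using ks pos "3.prems"(2) by (auto simp: urn_step_def)
  next
    case False
    then obtain i where "ks = ks0[i := ks0 ! i + 1]"
      using ks by (auto simp: urn_step_def)
    then show ?thesis
      using pos "3.prems"(2) by (auto dest!: set_update_subset_insert[THEN subsetD])
  qed
qed

lemma Kcol_eq_0_iff:
  assumes "\<forall>k\<in>set ks. 0 < k" "1 \<le> c"
  shows "Kcol ks c = 0 \<longleftrightarrow> length ks < c"
proof (cases "c \<le> length ks")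
  case True
  then have "ks ! (c - 1) \<in> set ks"
    using assms(2) by (intro nth_mem) simp
  then show ?thesis
    using True assms by (auto simp: Kcol_def)
qed (simp add: Kcol_def)

lemma prob_simon_urn_Kcol_eq_0:
  assumes "0 \<le> p" "p \<le> 1" "1 \<le> c"
  shows "measure_pmf.prob (simon_urn p (Suc m)) {ks. Kcol ks c = 0} =
    measure_pmf.prob (binomial_pmf m p) {..<c - 1}"
proof -
  have "{ks. Kcol ks c = 0} \<inter> set_pmf (simon_urn p (Suc m)) =
      length -` {..<c} \<inter> set_pmf (simon_urn p (Suc m))"
    using Kcol_eq_0_iff simon_urn_counts_pos assms(3) by auto
  then have "measure_pmf.prob (simon_urn p (Suc m)) {ks. Kcol ks c = 0} =
      measure_pmf.prob (map_pmf length (simon_urn p (Suc m))) {..<c}"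
    unfolding measure_map_pmf by (metis measure_Int_set_pmf)
  also have "\<dots> = measure_pmf.prob (binomial_pmf m p) (Suc -` {..<c})"
    using assms(1,2) by (simp add: map_pmf_length_simon_urn)
  also have "Suc -` {..<c} = {..<c - 1}"
    using assms(3) by auto
  finally show ?thesis .
qed

text \<open>\<open>Bin(m + 1, p) \<le> d\<close> happens iff \<open>Bin(m, p) < d\<close>, or \<open>Bin(m, p) = d\<close> and the last trial fails.\<close>

lemma binomial_cdf_Suc:
  fixes p :: "'a::comm_ring_1"
  shows "(\<Sum>j\<le>d. of_nat (Suc m choose j) * p ^ j * (1 - p) ^ (Suc m - j)) =
    of_nat (m choose d) * p ^ d * (1 - p) ^ (Suc m - d) +
    (\<Sum>j<d. of_nat (m choose j) * p ^ j * (1 - p) ^ (m - j))"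
proof (induction d)
  case 0
  then show ?case by simp
next
  case (Suc d)
  show ?case
  proof (cases "d \<le> m")
    case True
    have "(\<Sum>j\<le>Suc d. of_nat (Suc m choose j) * p ^ j * (1 - p) ^ (Suc m - j)) =
        of_nat (m choose d) * p ^ d * (1 - p) ^ (Suc m - d) +
        (\<Sum>j<d. of_nat (m choose j) * p ^ j * (1 - p) ^ (m - j)) +
        (of_nat (m choose d) + of_nat (m choose Suc d)) * p ^ Suc d * (1 - p) ^ (m - d)"
      by (simp add: Suc.IH)
    also have "(1 - p) ^ (Suc m - d) = (1 - p) * (1 - p) ^ (m - d)"
      using True by (simp add: Suc_diff_le)
    finally show ?thesis
      by (simp add: algebra_simps)
  next
    case False
    then show ?thesis by (simp add: Suc.IH binomial_eq_0)
  qed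
qed

theorem lemma4p1:
  fixes p :: real and n c :: nat
  assumes "0 < p" and "p < 1" and "2 \<le> c" and "2 \<le> n"
  shows "measure_pmf.prob (simon_urn p n) {ks. Kcol ks c = 0} =
      real ((n - 2) choose (c - 2)) * p ^ (c - 2) * (1 - p) ^ (n - c + 1)
    + (\<Sum>r = 1..c - 2. real ((n - 2) choose (r - 1)) * p ^ (r - 1) * (1 - p) ^ (n - r - 1))"
proof -
  obtain m where n: "n = Suc (Suc m)" using assms(4) by (metis add_2_eq_Suc le_Suc_ex)
  obtain d where c: "c = Suc (Suc d)" using assms(3) by (metis add_2_eq_Suc le_Suc_ex)
  have "measure_pmf.prob (simon_urn p n) {ks. Kcol ks c = 0} =
      measure_pmf.prob (binomial_pmf (Suc m) p) {..<c - 1}"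
    unfolding n using assms by (intro prob_simon_urn_Kcol_eq_0) auto
  also have "{..<c - 1} = {..d}"
    using c by auto
  also have "measure_pmf.prob (binomial_pmf (Suc m) p) {..d} =
      (\<Sum>j\<le>d. real (Suc m choose j) * p ^ j * (1 - p) ^ (Suc m - j))"
    using assms by (simp add: measure_measure_pmf_finite)
  also have "\<dots> = real (m choose d) * p ^ d * (1 - p) ^ (Suc m - d) +
      (\<Sum>j<d. real (m choose j) * p ^ j * (1 - p) ^ (m - j))"
    by (rule binomial_cdf_Suc)
  also have "real (m choose d) * p ^ d * (1 - p) ^ (Suc m - d) =
      real ((n - 2) choose (c - 2)) * p ^ (c - 2) * (1 - p) ^ (n - c + 1)"
    by (cases "d \<le> m") (auto simp: n c Suc_diff_le)
  also have "(\<Sum>j<d. real (m choose j) * p ^ j * (1 - p) ^ (m - j)) =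
      (\<Sum>r = 1..c - 2. real ((n - 2) choose (r - 1)) * p ^ (r - 1) * (1 - p) ^ (n - r - 1))"
    by (simp add: n c sum.atLeast1_atMost_eq)
  finally show ?thesis .
qed

end
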